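(* Let $A:\mathbb{C}^n\to\mathbb{C}^m$ be linear with $\lVert A\rVert_{2\to2}\le1$ and $A^*A$ injective, $b\in\mathbb{C}^m$, $\lambda>0$, $g:\mathbb{C}^n\to\mathbb{R}$ closed proper convex, and let $x^\star$ minimize $\frac12\lVert Ax-b\rVert_2^2+\lambda g(x)$. Let $p$ be a real polynomial, and set $$\gamma=\lVert I-p(A^*A)A^*A\rVert_{2\to2},\qquad \delta=\lVert (I-p(A^*A))A^*(Ax^\star-b)\rVert_2,$$ and assume $\gamma<1$. Let $y_0\in\mathbb{C}^n$ be arbitrary and $y_{k+1}=\mathrm{prox}_{\lambda g}\bigl(y_k-p(A^*A)A^*(Ay_k-b)\bigr)$, and $e_k=y_k-x^\star$. Then $\lVert e_{k+1}\rVert_2\le\gamma\lVert e_k\rVert_2+\delta$ for all $k\ge0$, and consequently $$\limsup_{k\to\infty}\lVert y_k-x^\star\rVert_2\le\frac{\delta}{1-\gamma}.$$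
   Context: $\lVert\cdot\rVert_2$ is the Euclidean norm, $A^*$ the adjoint, $\lVert\cdot\rVert_{2\to2}$ the induced operator norm, $p(A^*A)$ the polynomial evaluated at $A^*A$. For a closed proper convex $h$ and $\alpha>0$, $\mathrm{prox}_{\alpha h}(v)=\operatorname{argmin}_x \frac12\lVert x-v\rVert_2^2+\alpha h(x)$. In the paper the hypothesis $\gamma<1$ is asserted to follow from injectivity of $A^*A$ when $p$ is obtained by minimizing $\int_0^1(1-q(z)z)^2dz$ over polynomials of fixed degree. *)

theory Defs
  imports "HOL-Analysis.Analysis" "HOL-Computational_Algebra.Polynomial"
begin

definition adjoint_mat :: "complex^'n^'m \<Rightarrow> complex^'m^'n" where
  "adjoint_mat A = (\<chi> i j. cnj (A $ j $ i))"

fun matpow :: "complex^'n^'n \<Rightarrow> nat \<Rightarrow> complex^'n^'n" where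
  "matpow M 0 = mat 1"
| "matpow M (Suc k) = M ** matpow M k"

definition poly_mat :: "real poly \<Rightarrow> complex^'n^'n \<Rightarrow> complex^'n^'n" where
  "poly_mat p M = (\<Sum>i\<le>degree p. coeff p i *\<^sub>R matpow M i)"

text \<open>Induced 2->2 operator norm of a matrix (norm on complex^'n is Euclidean).\<close>
definition opnorm :: "complex^'n^'m \<Rightarrow> real" where
  "opnorm A = onorm (\<lambda>x. A *v x)"

definition prox :: "real \<Rightarrow> ('a::real_normed_vector \<Rightarrow> real) \<Rightarrow> 'a \<Rightarrow> 'a" where
  "prox alpha h v = (SOME x. \<forall>z. (1/2) * (norm (x - v))\<^sup>2 + alpha * h x
                                 \<le> (1/2) * (norm (z - v))\<^sup>2 + alpha * h z)"

end

theory Submission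
  imports Defs
begin

text \<open>The minimiser \<open>x\<^sup>\<star>\<close> is characterised by the variational inequality
  \<open>0 \<le> \<langle>A\<^sup>*(Ax\<^sup>\<star> - b), z - x\<^sup>\<star>\<rangle> + \<lambda>(g z - g x\<^sup>\<star>)\<close>, which says that \<open>x\<^sup>\<star>\<close> is the proximal point
  of \<open>x\<^sup>\<star> - A\<^sup>*(Ax\<^sup>\<star> - b)\<close>. Since the proximal map is nonexpansive, \<open>\<parallel>e\<^sub>k\<^sub>+\<^sub>1\<parallel>\<close> is at most the
  distance of the two arguments, which is \<open>(I - p(A\<^sup>*A)A\<^sup>*A)e\<^sub>k + (I - p(A\<^sup>*A))A\<^sup>*(Ax\<^sup>\<star> - b)\<close>.
  Unrolling \<open>\<parallel>e\<^sub>k\<^sub>+\<^sub>1\<parallel> \<le> \<gamma>\<parallel>e\<^sub>k\<parallel> + \<delta>\<close> gives \<open>\<parallel>e\<^sub>k\<parallel> \<le> \<gamma>\<^sup>k(\<parallel>e\<^sub>0\<parallel> - \<delta>/(1-\<gamma>)) + \<delta>/(1-\<gamma>)\<close>.\<close>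

lemma nonneg_if_nonneg_for_small_steps:
  fixes a c :: real
  assumes "\<And>t. 0 < t \<Longrightarrow> t \<le> 1 \<Longrightarrow> 0 \<le> a + t * c"
  shows "0 \<le> a"
proof (rule ccontr)
  assume "\<not> 0 \<le> a"
  hence a: "a < 0" by simp
  define t where "t = min 1 (-a / (\<bar>c\<bar> + 1))"
  have "0 < -a / (\<bar>c\<bar> + 1)" using a by (intro divide_pos_pos) auto
  hence t0: "0 < t" by (simp add: t_def)
  have "t * c \<le> t * \<bar>c\<bar>" using t0 by (simp add: mult_left_mono)
  also have "\<dots> \<le> (-a / (\<bar>c\<bar> + 1)) * \<bar>c\<bar>" by (rule mult_right_mono) (auto simp: t_def)
  also have "\<dots> < -a" using a by (simp add: field_simps)
  finally have "a + t * c < 0" by simp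
  with assms[OF t0] show False by (simp add: t_def)
qed

text \<open>First-order optimality for \<open>Q + \<lambda>g\<close> when \<open>Q\<close> is quadratic along the line through \<open>u\<close>
  in direction \<open>d\<close>: \<open>L\<close> is the directional derivative of \<open>Q\<close>.\<close>
lemma convex_minimizer_directional_ineq:
  fixes Q g :: "'a::real_vector \<Rightarrow> real"
  assumes cvx: "convex_on UNIV g" and lam: "lam \<ge> 0"
    and min: "\<And>z. Q u + lam * g u \<le> Q z + lam * g z"
    and quadratic: "\<And>t::real. Q (u + t *\<^sub>R d) = Q u + t * L + t\<^sup>2 * C"
  shows "0 \<le> L + lam * (g (u + d) - g u)"
proof (rule nonneg_if_nonneg_for_small_steps[where c = C])
  fix t :: real assume t0: "0 < t" and t1: "t \<le> 1"
  have "u + t *\<^sub>R d = (1 - t) *\<^sub>R u + t *\<^sub>R (u + d)" by (simp add: algebra_simps)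
  hence "g (u + t *\<^sub>R d) \<le> (1 - t) * g u + t * g (u + d)"
    using t0 t1 by (simp add: convex_onD[OF cvx])
  hence g_le: "lam * (g (u + t *\<^sub>R d) - g u) \<le> lam * (t * (g (u + d) - g u))"
    using lam by (intro mult_left_mono) (auto simp: algebra_simps)
  have "0 \<le> t * L + t\<^sup>2 * C + lam * (g (u + t *\<^sub>R d) - g u)"
    using min[of "u + t *\<^sub>R d"] quadratic[of t] by (simp add: algebra_simps)
  also have "\<dots> \<le> t * (L + lam * (g (u + d) - g u) + t * C)"
    using g_le by (simp add: algebra_simps power2_eq_square)
  finally show "0 \<le> L + lam * (g (u + d) - g u) + t * C"
    using t0 by (simp add: zero_le_mult_iff)
qed

lemma power2_norm_add_scaleR:
  fixes a d :: "'a::real_inner"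
  shows "(norm (a + t *\<^sub>R d))\<^sup>2 = (norm a)\<^sup>2 + 2 * t * inner a d + t\<^sup>2 * (norm d)\<^sup>2"
  unfolding power2_norm_eq_inner
  by (simp add: inner_add_left inner_add_right inner_commute algebra_simps power2_eq_square)

text \<open>The slope of the cone comes from the minimum of \<open>g\<close> on the unit sphere around \<open>v\<close>.\<close>
lemma convex_on_ge_cone_outside_ball:
  fixes g :: "'a::euclidean_space \<Rightarrow> real"
  assumes cvx: "convex_on UNIV g"
  obtains c where "c \<ge> 0" "\<And>x. norm (x - v) \<ge> 1 \<Longrightarrow> g x \<ge> g v - norm (x - v) * c"
proof -
  have cont: "continuous_on UNIV g" using convex_on_continuous[OF open_UNIV cvx] .
  have "sphere v 1 \<noteq> {}" by simp
  then obtain w0 where w0: "\<And>w. w \<in> sphere v 1 \<Longrightarrow> g w0 \<le> g w"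
    using continuous_attains_inf[OF compact_sphere _ continuous_on_subset[OF cont]] by blast
  show ?thesis
  proof (rule that[of "\<bar>g v - g w0\<bar>"])
  fix x assume R1: "norm (x - v) \<ge> 1"
  define R where "R = norm (x - v)"
  have R: "R \<ge> 1" using R1 by (simp add: R_def)
  define w where "w = (1 - 1/R) *\<^sub>R v + (1/R) *\<^sub>R x"
  have "w - v = (1/R) *\<^sub>R (x - v)" by (simp add: w_def algebra_simps)
  moreover have "x \<noteq> v" using R by (auto simp: R_def)
  ultimately have "norm (w - v) = 1" by (simp add: R_def)
  hence "g w0 \<le> g w" by (intro w0) (simp add: dist_norm norm_minus_commute)
  also have "g w \<le> (1 - 1/R) * g v + (1/R) * g x"
    unfolding w_def using R by (intro convex_onD[OF cvx]) auto
  finally have "R * g w0 \<le> R * ((1 - 1/R) * g v + (1/R) * g x)"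
    using R by (intro mult_left_mono) auto
  also have "\<dots> = (R - 1) * g v + g x" using R by (simp add: field_simps)
  finally have "g x \<ge> g v - R * (g v - g w0)" by (simp add: algebra_simps)
  moreover have "R * (g v - g w0) \<le> R * \<bar>g v - g w0\<bar>" using R by (intro mult_left_mono) auto
  ultimately show "g x \<ge> g v - norm (x - v) * \<bar>g v - g w0\<bar>" by (simp add: R_def)
  qed simp
qed

lemma prox_objective_has_minimizer:
  fixes g :: "'a::euclidean_space \<Rightarrow> real"
  assumes cvx: "convex_on UNIV g" and lam: "lam > 0"
  shows "\<exists>u. \<forall>z. (1/2) * (norm (u - v))\<^sup>2 + lam * g u \<le> (1/2) * (norm (z - v))\<^sup>2 + lam * g z"
proof -
  obtain c where c0: "c \<ge> 0" and cone: "\<And>x. norm (x - v) \<ge> 1 \<Longrightarrow> g x \<ge> g v - norm (x - v) * c"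
    using convex_on_ge_cone_outside_ball[OF cvx] by blast
  define F where "F = (\<lambda>x. (1/2) * (norm (x - v))\<^sup>2 + lam * g x)"
  have "continuous_on UNIV F"
    unfolding F_def by (intro continuous_intros convex_on_continuous[OF open_UNIV cvx])
  define R0 where "R0 = 2 * lam * c + 1"
  have R0: "R0 \<ge> 1" using c0 lam by (simp add: R0_def)
  then have "cball v R0 \<noteq> {}" by simp
  then obtain u where u: "\<And>z. z \<in> cball v R0 \<Longrightarrow> F u \<le> F z"
    using continuous_attains_inf[OF compact_cball _ continuous_on_subset[OF \<open>continuous_on UNIV F\<close>]]
    by blast
  text \<open>Beyond radius \<open>R0\<close> the quadratic term beats the linear decrease of \<open>\<lambda>g\<close>, so \<open>F\<close>
    exceeds \<open>F v\<close> there.\<close>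
  have "F u \<le> F z" for z
  proof (cases "norm (z - v) \<le> R0")
    case True
    then show ?thesis by (intro u) (simp add: dist_norm norm_minus_commute)
  next
    case False
    define R where "R = norm (z - v)"
    have R: "R > R0" "R \<ge> 1" using False R0 by (auto simp: R_def)
    have "R * (lam * c) \<le> R * (R / 2)" using R by (intro mult_left_mono) (auto simp: R0_def)
    moreover have "lam * (g v - R * c) \<le> lam * g z"
      using cone[of z] R lam by (intro mult_left_mono) (auto simp: R_def)
    ultimately have "F v \<le> F z"
      unfolding F_def R_def[symmetric] by (simp add: algebra_simps power2_eq_square)
    moreover have "F u \<le> F v" using u[of v] R0 by simp
    ultimately show ?thesis by simp
  qed
  thus ?thesis unfolding F_def by blast
qed

lemma prox_variational_ineq:
  fixes g :: "'a::euclidean_space \<Rightarrow> real"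
  assumes cvx: "convex_on UNIV g" and lam: "lam > 0"
  shows "0 \<le> inner (prox lam g v - v) (z - prox lam g v) + lam * (g z - g (prox lam g v))"
proof -
  let ?u = "prox lam g v"
  have min: "\<forall>z. (1/2) * (norm (?u - v))\<^sup>2 + lam * g ?u \<le> (1/2) * (norm (z - v))\<^sup>2 + lam * g z"
    unfolding prox_def by (rule someI_ex[OF prox_objective_has_minimizer[OF cvx lam]])
  have "0 \<le> inner (?u - v) (z - ?u) + lam * (g (?u + (z - ?u)) - g ?u)"
  proof (rule convex_minimizer_directional_ineq[where Q = "\<lambda>x. (1/2) * (norm (x - v))\<^sup>2"
        and C = "(1/2) * (norm (z - ?u))\<^sup>2", OF cvx])
    fix t :: real
    have line: "?u + t *\<^sub>R (z - ?u) - v = (?u - v) + t *\<^sub>R (z - ?u)" by (simp add: algebra_simps)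
    show "(1/2) * (norm (?u + t *\<^sub>R (z - ?u) - v))\<^sup>2 = (1/2) * (norm (?u - v))\<^sup>2
        + t * inner (?u - v) (z - ?u) + t\<^sup>2 * ((1/2) * (norm (z - ?u))\<^sup>2)"
      unfolding line power2_norm_add_scaleR by (simp add: algebra_simps)
  qed (use lam min in auto)
  thus ?thesis by simp
qed

lemma nonexpansive_of_variational_ineq:
  fixes g :: "'a::real_inner \<Rightarrow> real"
  assumes vi1: "\<And>z. 0 \<le> inner (u1 - v1) (z - u1) + lam * (g z - g u1)"
    and vi2: "\<And>z. 0 \<le> inner (u2 - v2) (z - u2) + lam * (g z - g u2)"
  shows "norm (u1 - u2) \<le> norm (v1 - v2)"
proof -
  have "0 \<le> inner (u1 - v1) (u2 - u1) + inner (u2 - v2) (u1 - u2)"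
    using vi1[of u2] vi2[of u1] by (simp add: algebra_simps)
  also have "\<dots> = inner (v1 - v2) (u1 - u2) - inner (u1 - u2) (u1 - u2)"
    by (simp add: inner_diff_left inner_diff_right inner_commute algebra_simps)
  finally have "(norm (u1 - u2))\<^sup>2 \<le> inner (v1 - v2) (u1 - u2)"
    by (simp add: power2_norm_eq_inner)
  also have "\<dots> \<le> norm (v1 - v2) * norm (u1 - u2)" by (rule norm_cauchy_schwarz)
  finally show ?thesis
    by (cases "norm (u1 - u2) = 0") (auto simp: power2_eq_square mult_le_cancel_right)
qed

lemma inner_matrix_vector_mult_adjoint:
  fixes A :: "complex^'n^'m"
  shows "inner (A *v d) r = inner d (adjoint_mat A *v r)"
  unfolding inner_vec_def matrix_vector_mult_def adjoint_mat_def inner_complex_def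
  apply (simp add: Re_sum Im_sum sum_distrib_left sum_distrib_right sum.distrib[symmetric])
  apply (subst sum.swap)
  apply (intro sum.cong refl)
  apply (simp add: algebra_simps)
  done

lemma least_squares_minimizer_variational_ineq:
  fixes A :: "complex^'n^'m" and g :: "complex^'n \<Rightarrow> real"
  assumes cvx: "convex_on UNIV g" and lam: "lam \<ge> 0"
    and min: "\<And>x. (1/2) * (norm (A *v xstar - b))\<^sup>2 + lam * g xstar
                   \<le> (1/2) * (norm (A *v x - b))\<^sup>2 + lam * g x"
  shows "0 \<le> inner (adjoint_mat A *v (A *v xstar - b)) (z - xstar) + lam * (g z - g xstar)"
proof -
  define r where "r = A *v xstar - b"
  define d where "d = z - xstar"
  have "0 \<le> inner r (A *v d) + lam * (g (xstar + d) - g xstar)"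
  proof (rule convex_minimizer_directional_ineq[where Q = "\<lambda>x. (1/2) * (norm (A *v x - b))\<^sup>2"
        and C = "(1/2) * (norm (A *v d))\<^sup>2", OF cvx lam min])
    fix t :: real
    have line: "A *v (xstar + t *\<^sub>R d) - b = r + t *\<^sub>R (A *v d)"
      by (simp add: r_def matrix_vector_right_distrib linear_scale[OF matrix_vector_mul_linear])
    show "(1/2) * (norm (A *v (xstar + t *\<^sub>R d) - b))\<^sup>2 = (1/2) * (norm (A *v xstar - b))\<^sup>2
        + t * inner r (A *v d) + t\<^sup>2 * ((1/2) * (norm (A *v d))\<^sup>2)"
      unfolding line power2_norm_add_scaleR r_def[symmetric] by (simp add: algebra_simps)
  qed
  moreover have "inner r (A *v d) = inner (adjoint_mat A *v r) d"
    using inner_matrix_vector_mult_adjoint[of A d r] by (simp add: inner_commute)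
  ultimately show ?thesis by (simp add: d_def r_def)
qed

lemma forward_step_difference:
  fixes A :: "complex^'n^'m" and P :: "complex^'n^'n"
  defines "As \<equiv> adjoint_mat A"
  shows "(y - P *v (As *v (A *v y - b))) - (x - As *v (A *v x - b))
       = (mat 1 - P ** (As ** A)) *v (y - x) + (mat 1 - P) *v (As *v (A *v x - b))"
proof -
  have split: "A *v y - b = A *v (y - x) + (A *v x - b)" by (simp add: matrix_vector_mult_diff_distrib)
  have "P *v (As *v (A *v y - b)) = P *v (As *v (A *v (y - x))) + P *v (As *v (A *v x - b))"
    unfolding split by (simp add: matrix_vector_right_distrib)
  moreover have "P *v (As *v (A *v (y - x))) = (P ** (As ** A)) *v (y - x)"
    by (simp add: matrix_vector_mul_assoc)
  ultimately show ?thesis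
    by (simp add: matrix_vector_mult_diff_rdistrib algebra_simps)
qed

lemma limsup_le_of_affine_recursive_bound:
  fixes a :: "nat \<Rightarrow> real"
  assumes step: "\<And>k. a (Suc k) \<le> \<gamma> * a k + \<delta>" and "0 \<le> \<gamma>" "\<gamma> < 1"
  shows "limsup (\<lambda>k. ereal (a k)) \<le> ereal (\<delta> / (1 - \<gamma>))"
proof -
  define D where "D = \<delta> / (1 - \<gamma>)"
  have fixpoint: "\<gamma> * D + \<delta> = D" using \<open>\<gamma> < 1\<close> by (simp add: D_def field_simps)
  have bound: "a k \<le> \<gamma> ^ k * (a 0 - D) + D" for k
  proof (induction k)
    case (Suc k)
    have "a (Suc k) \<le> \<gamma> * (\<gamma> ^ k * (a 0 - D) + D) + \<delta>"
      using step[of k] Suc mult_left_mono[OF Suc \<open>0 \<le> \<gamma>\<close>] by linarith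
    then show ?case using fixpoint by (simp add: algebra_simps)
  qed simp
  have "(\<lambda>k. \<gamma> ^ k * (a 0 - D) + D) \<longlonglongrightarrow> 0 * (a 0 - D) + D"
    using assms by (intro tendsto_intros LIMSEQ_power_zero) auto
  then have "limsup (\<lambda>k. ereal (\<gamma> ^ k * (a 0 - D) + D)) = ereal D"
    by (intro lim_imp_Limsup) (auto simp: lim_ereal)
  moreover have "limsup (\<lambda>k. ereal (a k)) \<le> limsup (\<lambda>k. ereal (\<gamma> ^ k * (a 0 - D) + D))"
    using bound by (intro Limsup_mono always_eventually allI) simp
  ultimately show ?thesis by (simp add: D_def)
qed

theorem mainTheorem7:
  fixes A :: "complex^'n^'m" and b :: "complex^'m" and lam :: real
    and g :: "complex^'n \<Rightarrow> real" and xstar :: "complex^'n"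
    and p :: "real poly" and y :: "nat \<Rightarrow> complex^'n"
    and \<gamma> \<delta> :: real
  assumes normA: "opnorm A \<le> 1"
    and inj: "inj (\<lambda>x. (adjoint_mat A ** A) *v x)"
    and lam_pos: "lam > 0"
    and g_convex: "convex_on UNIV g"
    and g_closed: "\<And>c. closed {x. g x \<le> c}"
    and xstar_min: "\<And>x. (1/2) * (norm (A *v xstar - b))\<^sup>2 + lam * g xstar
                        \<le> (1/2) * (norm (A *v x - b))\<^sup>2 + lam * g x"
    and gamma_def: "\<gamma> = opnorm (mat 1 - poly_mat p (adjoint_mat A ** A) ** (adjoint_mat A ** A))"
    and delta_def: "\<delta> = norm ((mat 1 - poly_mat p (adjoint_mat A ** A)) *v
                               (adjoint_mat A *v (A *v xstar - b)))"
    and gamma_lt: "\<gamma> < 1"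
    and y_rec: "\<And>k. y (Suc k) = prox lam g
                   (y k - poly_mat p (adjoint_mat A ** A) *v (adjoint_mat A *v (A *v y k - b)))"
  shows "(\<forall>k. norm (y (Suc k) - xstar) \<le> \<gamma> * norm (y k - xstar) + \<delta>)
         \<and> limsup (\<lambda>k. ereal (norm (y k - xstar))) \<le> ereal (\<delta> / (1 - \<gamma>))"
proof -
  let ?P = "poly_mat p (adjoint_mat A ** A)"
  let ?T = "mat 1 - ?P ** (adjoint_mat A ** A)"
  let ?r = "A *v xstar - b"
  have xstar_vi: "0 \<le> inner (xstar - (xstar - adjoint_mat A *v ?r)) (z - xstar)
                     + lam * (g z - g xstar)" for z
    using least_squares_minimizer_variational_ineq[OF g_convex _ xstar_min, of z] lam_pos by simp
  have step: "norm (y (Suc k) - xstar) \<le> \<gamma> * norm (y k - xstar) + \<delta>" for k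
  proof -
    have "norm (y (Suc k) - xstar)
        \<le> norm ((y k - ?P *v (adjoint_mat A *v (A *v y k - b))) - (xstar - adjoint_mat A *v ?r))"
      unfolding y_rec
      by (rule nonexpansive_of_variational_ineq[OF prox_variational_ineq[OF g_convex lam_pos] xstar_vi])
    also have "\<dots> = norm (?T *v (y k - xstar) + (mat 1 - ?P) *v (adjoint_mat A *v ?r))"
      by (simp only: forward_step_difference)
    also have "\<dots> \<le> norm (?T *v (y k - xstar)) + norm ((mat 1 - ?P) *v (adjoint_mat A *v ?r))"
      by (rule norm_triangle_ineq)
    also have "\<dots> \<le> \<gamma> * norm (y k - xstar) + \<delta>"
      using onorm[OF matrix_vector_mul_bounded_linear, of ?T "y k - xstar"]
      unfolding gamma_def delta_def opnorm_def by simp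
    finally show ?thesis .
  qed
  have "\<gamma> \<ge> 0" unfolding gamma_def opnorm_def by (rule onorm_pos_le[OF matrix_vector_mul_bounded_linear])
  then have "limsup (\<lambda>k. ereal (norm (y k - xstar))) \<le> ereal (\<delta> / (1 - \<gamma>))"
    using step gamma_lt by (intro limsup_le_of_affine_recursive_bound)
  with step show ?thesis by blast
qed

end
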